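(* Let $\mu$ be a probability measure on $\mathrm{Homeo}_+(\mathbb{R})$ with finite or countable support having the shiftability property. If there exist $x,y\in\mathbb{R}$ with $\phi_+(x)>0$ and $\phi_-(y)>0$, then $\phi_+(z)+\phi_-(z)=1$ for every $z\in\mathbb{R}$.
   Context: Setup. Let $\mu$ be a probability measure on the group $\mathrm{Homeo}_+(\mathbb{R})$ of orientation-preserving homeomorphisms of $\mathbb{R}$, supported on a finite or countable set $\{f_1,f_2,\dots\}$ with $p_i=\mu(\{f_i\})>0$, $\sum_i p_i=1$. Let $g_1,g_2,\dots$ be i.i.d. random maps with law $\mu$, and set $F_0=\mathrm{id}$, $F_n=g_n\circ\cdots\circ g_1$. For $x\in\mathbb{R}$ let $\phi_+(x)=\mathbb{P}(\lim_n F_n(x)=+\infty)$ and $\phi_-(x)=\mathbb{P}(\lim_n F_n(x)=-\infty)$. The system has the shiftability property if for every $x\in\mathbb{R}$ there exist $f,g$ with $\mu(\{f\})>0$, $\mu(\{g\})>0$ and $g(x)<x<f(x)$. *)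

theory Defs
  imports "HOL-Probability.Probability"
begin

definition homeo_plus :: "(real \<Rightarrow> real) \<Rightarrow> bool" where
  "homeo_plus f \<longleftrightarrow> (\<exists>g. homeomorphism UNIV UNIV f g) \<and> strict_mono f"

text \<open>The random walk F_n = g_n o ... o g_1 driven by the stream (g_1, g_2, ...),
  where g_(k+1) is the k-th element (0-indexed) of the stream.\<close>
primrec walk :: "(real \<Rightarrow> real) stream \<Rightarrow> nat \<Rightarrow> real \<Rightarrow> real" where
  "walk \<omega> 0 x = x"
| "walk \<omega> (Suc n) x = (\<omega> !! n) (walk \<omega> n x)"

text \<open>The law of the i.i.d. sequence g_1, g_2, ... (completed, so that the
  divergence events are measurable).\<close>
definition walk_space :: "(real \<Rightarrow> real) pmf \<Rightarrow> (real \<Rightarrow> real) stream measure" where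
  "walk_space \<mu> = completion (stream_space (measure_pmf \<mu>))"

definition phi_plus :: "(real \<Rightarrow> real) pmf \<Rightarrow> real \<Rightarrow> real" where
  "phi_plus \<mu> x = measure (walk_space \<mu>)
     {\<omega> \<in> space (walk_space \<mu>). filterlim (\<lambda>n. walk \<omega> n x) at_top sequentially}"

definition phi_minus :: "(real \<Rightarrow> real) pmf \<Rightarrow> real \<Rightarrow> real" where
  "phi_minus \<mu> x = measure (walk_space \<mu>)
     {\<omega> \<in> space (walk_space \<mu>). filterlim (\<lambda>n. walk \<omega> n x) at_bot sequentially}"

definition shiftable :: "(real \<Rightarrow> real) pmf \<Rightarrow> bool" where
  "shiftable \<mu> \<longleftrightarrow> (\<forall>x. \<exists>f \<in> set_pmf \<mu>. \<exists>g \<in> set_pmf \<mu>. g x < x \<and> x < f x)"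

end

theory Submission
  imports Defs
begin

text \<open>
  By monotonicity of the maps, \<open>b(y) = \<phi>\<^sub>-(y)\<close> is non-increasing, and conditioning on the
  first step gives \<open>b(y) \<ge> \<mu>{g} b(g y)\<close>. If \<open>b\<close> vanished somewhere, the supremum \<open>s\<close> of
  \<open>{b > 0}\<close> would be finite; a map \<open>g\<close> with \<open>g s < s\<close> still satisfies \<open>g w < s\<close> for some
  \<open>w > s\<close> by continuity, so \<open>b(g w) > 0\<close> and hence \<open>b(w) > 0\<close>, a contradiction. Hence \<open>b > 0\<close>
  everywhere.

  Now fix \<open>c\<close> and consider the event that the orbit of \<open>z\<close> is infinitely often below \<open>c\<close>
  without tending to \<open>-\<infinity>\<close>. Stopping at the first visit below \<open>c\<close> after time \<open>m\<close>, its
  probability inside any cylinder of length \<open>m\<close> is at most \<open>1 - b(c)\<close> times the probability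
  of the cylinder. Since cylinders approximate every measurable set, the event has
  probability \<open>x \<le> (1 - b(c)) x\<close>, hence \<open>0\<close>. So almost surely the orbit either tends to
  \<open>-\<infinity>\<close> or eventually leaves every half-line \<open>(-\<infinity>, c]\<close>, i.e. tends to \<open>+\<infinity>\<close>.
\<close>

definition walk_list :: "(real \<Rightarrow> real) list \<Rightarrow> real \<Rightarrow> real" where
  "walk_list fs x = fold (\<lambda>f y. f y) fs x"

lemma walk_list_Nil [simp]: "walk_list [] x = x"
  by (simp add: walk_list_def)

lemma walk_list_Cons [simp]: "walk_list (f # fs) x = walk_list fs (f x)"
  by (simp add: walk_list_def)

lemma walk_list_snoc: "walk_list (fs @ [f]) x = f (walk_list fs x)"
  by (simp add: walk_list_def)

lemma walk_eq_walk_list_stake: "walk \<omega> n x = walk_list (stake n \<omega>) x"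
  by (induct n) (simp_all add: stake_Suc walk_list_snoc del: stake.simps(2))

lemma walk_Stream_Suc: "walk (f ## \<omega>) (Suc n) x = walk \<omega> n (f x)"
  by (induct n) auto

lemma filterlim_at_top_iff_of_nat:
  fixes f :: "'a \<Rightarrow> real"
  shows "filterlim f at_top F \<longleftrightarrow> (\<forall>k::nat. eventually (\<lambda>n. real k \<le> f n) F)"
  unfolding filterlim_at_top
proof (intro iffI allI)
  fix Z :: real
  obtain k :: nat where "Z \<le> real k"
    using real_arch_simple by blast
  moreover assume "\<forall>k::nat. eventually (\<lambda>n. real k \<le> f n) F"
  ultimately show "eventually (\<lambda>n. Z \<le> f n) F"
    by (auto elim!: allE[of _ k] eventually_mono)
qed auto

lemma filterlim_at_bot_iff_of_nat:
  fixes f :: "'a \<Rightarrow> real"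
  shows "filterlim f at_bot F \<longleftrightarrow> (\<forall>k::nat. eventually (\<lambda>n. f n \<le> - real k) F)"
  using filterlim_at_top_iff_of_nat[of "\<lambda>n. - f n" F]
  by (simp add: filterlim_uminus_at_top le_minus_iff)

lemma isCont_less_right:
  fixes g :: "real \<Rightarrow> real"
  assumes "isCont g s" "g s < c"
  shows "\<exists>w>s. g w < c"
proof -
  have "(g \<longlongrightarrow> g s) (at_right s)"
    using assms(1) by (simp add: isCont_def filterlim_at_split)
  then have "eventually (\<lambda>w. s < w \<and> g w < c) (at_right s)"
    using order_tendstoD(2)[OF _ assms(2)] eventually_at_right_less by (metis eventually_conj)
  then show ?thesis
    using eventually_happens'[OF trivial_limit_at_right_real] by blast
qed

lemma (in finite_measure) measure_UN_diff_UN_lessThan_less: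
  fixes A :: "nat \<Rightarrow> 'a set"
  assumes "range A \<subseteq> sets M" and "e > 0"
  shows "\<exists>N. measure M ((\<Union>i. A i) - (\<Union>i<N. A i)) < e"
proof -
  have "incseq (\<lambda>N. \<Union>i<N. A i)"
    by (intro monoI UN_mono) auto
  then have "(\<lambda>N. measure M (\<Union>i<N. A i)) \<longlonglongrightarrow> measure M (\<Union>N. \<Union>i<N. A i)"
    using assms(1) by (intro finite_Lim_measure_incseq) auto
  also have "(\<Union>N. \<Union>i<N. A i) = (\<Union>i. A i)"
    by blast
  finally obtain N where "measure M (\<Union>i. A i) - e < measure M (\<Union>i<N. A i)"
    using order_tendstoD(1)[of _ "measure M (\<Union>i. A i)" sequentially "measure M (\<Union>i. A i) - e"]
      assms(2) by (auto simp: eventually_sequentially)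
  moreover have "measure M ((\<Union>i. A i) - (\<Union>i<N. A i)) = measure M (\<Union>i. A i) - measure M (\<Union>i<N. A i)"
    using assms(1) by (intro finite_measure_Diff) auto
  ultimately show ?thesis
    by (intro exI[of _ N]) linarith
qed

locale homeo_walk =
  fixes \<mu> :: "(real \<Rightarrow> real) pmf"
  assumes homeo_plus_support: "\<forall>f \<in> set_pmf \<mu>. homeo_plus f"

sublocale homeo_walk \<subseteq> P: prob_space "stream_space (measure_pmf \<mu>)"
  by (rule prob_space.prob_space_stream_space[OF prob_space_measure_pmf])

context homeo_walk
begin

abbreviation "\<Omega> \<equiv> streams (set_pmf \<mu>)"
abbreviation "M \<equiv> stream_space (measure_pmf \<mu>)"

lemma space_M [simp]: "space M = UNIV"
  by (simp add: space_stream_space)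

lemma sets_M: "sets M = sets (stream_space (count_space UNIV))"
  by (rule sets_stream_space_cong) simp

lemma streams_in_sets [measurable]: "\<Omega> \<in> sets M"
  by (rule streams_sets) simp

lemma AE_in_streams: "AE \<omega> in M. \<omega> \<in> \<Omega>"
proof -
  have "AE \<omega> in M. stream_all (\<lambda>f. f \<in> set_pmf \<mu>) \<omega>"
    by (rule prob_space.AE_stream_all[OF prob_space_measure_pmf])
       (auto simp: pred_def AE_measure_pmf)
  then show ?thesis
    by (rule eventually_mono) (auto simp: stream_all_def streams_iff_snth snth_sset)
qed

lemma measure_streams: "measure M \<Omega> = 1"
  using P.prob_eq_1[of \<Omega>] AE_in_streams by simp

lemma streams_compl_null: "UNIV - \<Omega> \<in> null_sets M"
proof -
  have "{\<omega> \<in> space M. \<omega> \<notin> \<Omega>} \<in> null_sets M"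
    using AE_in_streams
    by (subst AE_iff_null[symmetric])
       (auto simp: Compl_eq[symmetric] Compl_eq_Diff_UNIV intro: sets.compl_sets[of _ M, simplified])
  then show ?thesis by (simp add: set_diff_eq)
qed

lemma measure_walk_space:
  assumes "{\<omega> \<in> \<Omega>. Q \<omega>} \<in> sets M"
  shows "measure (walk_space \<mu>) {\<omega> \<in> space (walk_space \<mu>). Q \<omega>} = measure M {\<omega> \<in> \<Omega>. Q \<omega>}"
proof -
  let ?E = "{\<omega> \<in> space (walk_space \<mu>). Q \<omega>}"
  have "?E = {\<omega> \<in> \<Omega>. Q \<omega>} \<union> (?E - \<Omega>)"
    by (auto simp: walk_space_def)
  then have "measure (completion M) ?E = measure (completion M) ({\<omega> \<in> \<Omega>. Q \<omega>} \<union> (?E - \<Omega>))"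
    by (rule arg_cong)
  also have "\<dots> = measure (completion M) {\<omega> \<in> \<Omega>. Q \<omega>}"
  proof (rule measure_Un_null_set)
    show "?E - \<Omega> \<in> null_sets (completion M)"
      by (rule null_sets_completion_subset[OF _ null_sets_completionI[OF streams_compl_null]]) auto
  qed (rule sets_completionI_sets[OF assms])
  also have "\<dots> = measure M {\<omega> \<in> \<Omega>. Q \<omega>}"
    using assms by simp
  finally show ?thesis
    by (simp only: walk_space_def)
qed

text \<open>As the support of \<open>\<mu>\<close> is countable, \<open>Cyl n B\<close> is a countable union of basic cylinders
  and hence measurable for arbitrary \<open>B\<close>; all events about the walk are shown measurable by
  expressing them through such cylinders.\<close>
definition Cyl :: "nat \<Rightarrow> (real \<Rightarrow> real) list set \<Rightarrow> (real \<Rightarrow> real) stream set" where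
  "Cyl n B = {\<omega> \<in> \<Omega>. stake n \<omega> \<in> B}"

lemma Cyl_subset_streams: "Cyl n B \<subseteq> \<Omega>"
  by (auto simp: Cyl_def)

lemma Cyl_compl: "Cyl n (- B) = \<Omega> - Cyl n B"
  by (auto simp: Cyl_def)

lemma Cyl_eq_UN_sstart:
  "Cyl n B = (\<Union>l \<in> {l \<in> lists (set_pmf \<mu>). length l = n \<and> l \<in> B}. sstart (set_pmf \<mu>) l)"
proof -
  have "\<omega> \<in> sstart (set_pmf \<mu>) l \<longleftrightarrow> \<omega> \<in> \<Omega> \<and> stake (length l) \<omega> = l"
    if "l \<in> lists (set_pmf \<mu>)" for \<omega> l
  proof
    assume "\<omega> \<in> sstart (set_pmf \<mu>) l"
    moreover from this have "\<omega> \<in> \<Omega>"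
      using sstart_in_streams[OF that] by auto
    ultimately show "\<omega> \<in> \<Omega> \<and> stake (length l) \<omega> = l"
      by (auto simp: sstart_eq intro!: nth_equalityI)
  next
    assume "\<omega> \<in> \<Omega> \<and> stake (length l) \<omega> = l"
    then show "\<omega> \<in> sstart (set_pmf \<mu>) l"
      by (auto simp: sstart_eq) (metis stake_nth)
  qed
  moreover have "\<omega> \<in> \<Omega> \<Longrightarrow> stake n \<omega> \<in> lists (set_pmf \<mu>)" for \<omega>
    by (auto simp: in_set_conv_nth streams_iff_snth)
  ultimately show ?thesis
    unfolding Cyl_def by fastforce
qed

lemma sstart_eq_Cyl: "l \<in> lists (set_pmf \<mu>) \<Longrightarrow> sstart (set_pmf \<mu>) l = Cyl (length l) {l}"
  unfolding Cyl_eq_UN_sstart by auto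

lemma sets_Cyl [measurable]: "Cyl n B \<in> sets M"
  unfolding Cyl_eq_UN_sstart sets_M
  by (intro sets.countable_UN' countable_Collect countable_lists sets_sstart) auto

lemma pred_Cyl [measurable]: "Measurable.pred M (\<lambda>\<omega>. \<omega> \<in> Cyl n B)"
  using sets_Cyl[of n B] by (simp add: pred_def)

lemma in_Cyl_walk_iff:
  "\<omega> \<in> Cyl n {l. walk_list l y \<le> c} \<longleftrightarrow> \<omega> \<in> \<Omega> \<and> walk \<omega> n y \<le> c"
  "\<omega> \<in> Cyl n {l. c \<le> walk_list l y} \<longleftrightarrow> \<omega> \<in> \<Omega> \<and> c \<le> walk \<omega> n y"
  by (simp_all add: Cyl_def walk_eq_walk_list_stake)

lemma Stream_in_Cyl_Suc:
  "f \<in> set_pmf \<mu> \<Longrightarrow> {\<omega> \<in> \<Omega>. f ## \<omega> \<in> Cyl (Suc n) B} = Cyl n {l. f # l \<in> B}"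
  by (auto simp: Cyl_def streams_Stream)

lemma Cyl_Union_finite:
  fixes m :: "nat \<Rightarrow> nat"
  shows "\<exists>K C. Cyl K C = (\<Union>i<N. Cyl (m i) (B i))"
proof (intro exI)
  have "i < N \<Longrightarrow> m i \<le> (\<Sum>i<N. m i)" for i
    by (rule member_le_sum) simp_all
  then show "Cyl (\<Sum>i<N. m i) {l. \<exists>i<N. take (m i) l \<in> B i} = (\<Union>i<N. Cyl (m i) (B i))"
    by (auto simp: Cyl_def take_stake min_def)
qed

definition to_top :: "real \<Rightarrow> (real \<Rightarrow> real) stream set" where
  "to_top y = {\<omega> \<in> \<Omega>. filterlim (\<lambda>n. walk \<omega> n y) at_top sequentially}"

definition to_bot :: "real \<Rightarrow> (real \<Rightarrow> real) stream set" where
  "to_bot y = {\<omega> \<in> \<Omega>. filterlim (\<lambda>n. walk \<omega> n y) at_bot sequentially}"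

definition returns_below :: "real \<Rightarrow> real \<Rightarrow> (real \<Rightarrow> real) stream set" where
  "returns_below c y = {\<omega> \<in> \<Omega>. (\<exists>\<^sub>\<infinity>n. walk \<omega> n y \<le> c) \<and> \<omega> \<notin> to_bot y}"

lemma to_top_subset_streams: "to_top y \<subseteq> \<Omega>"
  by (auto simp: to_top_def)

lemma to_bot_subset_streams: "to_bot y \<subseteq> \<Omega>"
  by (auto simp: to_bot_def)

lemma sets_to_top [measurable]: "to_top y \<in> sets M"
proof -
  have eq: "to_top y = \<Omega> \<inter> {\<omega> \<in> space M. \<forall>k::nat. \<exists>N. \<forall>n\<ge>N. \<omega> \<in> Cyl n {l. real k \<le> walk_list l y}}"
    by (auto simp: to_top_def filterlim_at_top_iff_of_nat eventually_sequentially in_Cyl_walk_iff)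
  show ?thesis
    unfolding eq by measurable
qed

lemma sets_to_bot [measurable]: "to_bot y \<in> sets M"
proof -
  have eq: "to_bot y = \<Omega> \<inter> {\<omega> \<in> space M. \<forall>k::nat. \<exists>N. \<forall>n\<ge>N. \<omega> \<in> Cyl n {l. walk_list l y \<le> - real k}}"
    by (auto simp: to_bot_def filterlim_at_bot_iff_of_nat eventually_sequentially in_Cyl_walk_iff)
  show ?thesis
    unfolding eq by measurable
qed

lemma sets_returns_below [measurable]: "returns_below c y \<in> sets M"
proof -
  have eq: "returns_below c y =
      \<Omega> \<inter> {\<omega> \<in> space M. (\<forall>m. \<exists>n\<ge>m. \<omega> \<in> Cyl n {l. walk_list l y \<le> c}) \<and> \<omega> \<notin> to_bot y}"
    by (auto simp: returns_below_def INFM_nat_le in_Cyl_walk_iff)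
  show ?thesis
    unfolding eq by measurable
qed

lemma phi_plus_eq: "phi_plus \<mu> y = measure M (to_top y)"
  using measure_walk_space[of "\<lambda>\<omega>. filterlim (\<lambda>n. walk \<omega> n y) at_top sequentially"]
  by (simp add: phi_plus_def to_top_def[symmetric])

lemma phi_minus_eq: "phi_minus \<mu> y = measure M (to_bot y)"
  using measure_walk_space[of "\<lambda>\<omega>. filterlim (\<lambda>n. walk \<omega> n y) at_bot sequentially"]
  by (simp add: phi_minus_def to_bot_def[symmetric])

lemma emeasure_first_step:
  assumes "E \<in> sets M" "E \<subseteq> \<Omega>"
  shows "emeasure M E = (\<integral>\<^sup>+f. emeasure M {\<omega> \<in> \<Omega>. f ## \<omega> \<in> E} \<partial>measure_pmf \<mu>)"
proof -
  have "emeasure M E = (\<integral>\<^sup>+f. emeasure M {\<omega> \<in> space M. f ## \<omega> \<in> E} \<partial>measure_pmf \<mu>)"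
    by (rule prob_space.emeasure_stream_space[OF prob_space_measure_pmf assms(1)])
  also have "\<dots> = (\<integral>\<^sup>+f. emeasure M {\<omega> \<in> \<Omega>. f ## \<omega> \<in> E} \<partial>measure_pmf \<mu>)"
    using assms(2)
    by (intro nn_integral_cong_AE eventually_mono[OF AE_measure_pmf])
       (auto simp: streams_Stream intro!: arg_cong[where f = "emeasure M"])
  finally show ?thesis .
qed

lemma walk_mono: "\<omega> \<in> \<Omega> \<Longrightarrow> y \<le> z \<Longrightarrow> walk \<omega> n y \<le> walk \<omega> n z"
proof (induct n)
  case (Suc n)
  then have "strict_mono (\<omega> !! n)"
    using homeo_plus_support by (auto simp: streams_iff_snth homeo_plus_def)
  with Suc show ?case
    by (simp add: strict_mono_less_eq)
qed simp

lemma to_bot_antimono: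
  assumes "y \<le> z"
  shows "to_bot z \<subseteq> to_bot y"
proof
  fix \<omega> assume "\<omega> \<in> to_bot z"
  then have \<omega>: "\<omega> \<in> \<Omega>" and z: "eventually (\<lambda>n. walk \<omega> n z \<le> Z) sequentially" for Z
    by (auto simp: to_bot_def filterlim_at_bot)
  have "eventually (\<lambda>n. walk \<omega> n y \<le> Z) sequentially" for Z
    using z[of Z] by (rule eventually_mono) (meson order_trans walk_mono[OF \<omega> assms])
  with \<omega> show "\<omega> \<in> to_bot y"
    by (simp add: to_bot_def filterlim_at_bot)
qed

lemma Stream_in_to_bot:
  assumes "f \<in> set_pmf \<mu>"
  shows "{\<omega> \<in> \<Omega>. f ## \<omega> \<in> to_bot y} = to_bot (f y)"
proof -
  have "filterlim (\<lambda>n. walk (f ## \<omega>) n y) at_bot sequentially \<longleftrightarrow>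
      filterlim (\<lambda>n. walk \<omega> n (f y)) at_bot sequentially" for \<omega>
    using filterlim_sequentially_Suc[of "\<lambda>n. walk (f ## \<omega>) n y" at_bot]
    by (simp only: walk_Stream_Suc)
  with assms show ?thesis
    by (auto simp: to_bot_def streams_Stream)
qed

lemma measure_to_bot_antimono: "y \<le> z \<Longrightarrow> measure M (to_bot z) \<le> measure M (to_bot y)"
  by (rule P.finite_measure_mono[OF to_bot_antimono]) auto

lemma pmf_mult_measure_to_bot_le:
  "pmf \<mu> f * measure M (to_bot (f y)) \<le> measure M (to_bot y)"
proof -
  have "emeasure M (to_bot y) = (\<integral>\<^sup>+g. emeasure M {\<omega> \<in> \<Omega>. g ## \<omega> \<in> to_bot y} \<partial>measure_pmf \<mu>)"
    by (rule emeasure_first_step[OF sets_to_bot to_bot_subset_streams])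
  also have "\<dots> = (\<integral>\<^sup>+g. emeasure M (to_bot (g y)) \<partial>measure_pmf \<mu>)"
    by (intro nn_integral_cong_AE AE_pmfI) (simp add: Stream_in_to_bot)
  also have "\<dots> \<ge> (\<integral>\<^sup>+g. emeasure M (to_bot (f y)) * indicator {f} g \<partial>measure_pmf \<mu>)"
    by (intro nn_integral_mono) (auto split: split_indicator)
  also have "(\<integral>\<^sup>+g. emeasure M (to_bot (f y)) * indicator {f} g \<partial>measure_pmf \<mu>) =
      ennreal (pmf \<mu> f * measure M (to_bot (f y)))"
    by (subst nn_integral_cmult_indicator)
       (simp_all add: emeasure_pmf_single P.emeasure_eq_measure ennreal_mult'' mult.commute)
  finally show ?thesis
    by (simp add: P.emeasure_eq_measure)
qed

lemma measure_to_bot_pos: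
  assumes "shiftable \<mu>" and "measure M (to_bot y) > 0"
  shows "measure M (to_bot z) > 0"
proof (rule ccontr)
  define G where "G = {w. measure M (to_bot w) > 0}"
  assume "\<not> measure M (to_bot z) > 0"
  then have "w < z" if "w \<in> G" for w
    using that measure_to_bot_antimono[of z w] by (force simp: G_def)
  then have bdd: "bdd_above G" and "G \<noteq> {}"
    using assms(2) by (auto simp: G_def intro!: bdd_aboveI[of _ z] less_imp_le)
  define s where "s = Sup G"
  obtain g where g: "g \<in> set_pmf \<mu>" "g s < s"
    using assms(1) by (auto simp: shiftable_def)
  then have "isCont g s"
    using homeo_plus_support
    by (auto simp: homeo_plus_def homeomorphism_def continuous_on_eq_continuous_at)
  then obtain w where "s < w" "g w < s"
    using isCont_less_right g(2) by blast
  then obtain v where "v \<in> G" "g w < v"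
    using less_cSup_iff[OF \<open>G \<noteq> {}\<close> bdd] by (auto simp: s_def)
  then have "0 < measure M (to_bot (g w))"
    using measure_to_bot_antimono[of "g w" v] by (simp add: G_def)
  moreover have "0 < pmf \<mu> g"
    using g(1) by (simp add: pmf_positive)
  ultimately have "0 < pmf \<mu> g * measure M (to_bot (g w))"
    by simp
  also have "\<dots> \<le> measure M (to_bot w)"
    by (rule pmf_mult_measure_to_bot_le)
  finally have "w \<in> G"
    by (simp add: G_def)
  with \<open>s < w\<close> bdd show False
    by (auto simp: s_def dest: cSup_upper)
qed

lemma Stream_in_Cyl_diff_to_bot:
  "f \<in> set_pmf \<mu> \<Longrightarrow>
    {\<omega> \<in> \<Omega>. f ## \<omega> \<in> Cyl (Suc n) B - to_bot y} = Cyl n {l. f # l \<in> B} - to_bot (f y)"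
  using Stream_in_Cyl_Suc[of f n B] Stream_in_to_bot[of f y] by blast

text \<open>Markov property at time \<open>n\<close>: from any point below \<open>c\<close> the walk tends to \<open>-\<infinity>\<close> with
  probability at least \<open>\<phi>\<^sub>-(c)\<close>.\<close>
lemma emeasure_Cyl_diff_to_bot_le:
  assumes "\<forall>l\<in>B. walk_list l y \<le> c"
  shows "emeasure M (Cyl n B - to_bot y) \<le> ennreal (1 - measure M (to_bot c)) * emeasure M (Cyl n B)"
  using assms
proof (induct n arbitrary: y B)
  case 0
  show ?case
  proof (cases "[] \<in> B")
    case True
    with 0 have "y \<le> c" and Cyl: "Cyl 0 B = \<Omega>"
      by (auto simp: Cyl_def)
    have "emeasure M (\<Omega> - to_bot y) = ennreal (1 - measure M (to_bot y))"
      using P.finite_measure_Diff[OF streams_in_sets sets_to_bot to_bot_subset_streams]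
      by (simp add: P.emeasure_eq_measure measure_streams)
    also have "\<dots> \<le> ennreal (1 - measure M (to_bot c))"
      using measure_to_bot_antimono[OF \<open>y \<le> c\<close>] by (simp add: ennreal_leI)
    finally show ?thesis
      by (simp add: Cyl P.emeasure_eq_measure measure_streams)
  next
    case False
    then show ?thesis
      by (simp add: Cyl_def)
  qed
next
  case (Suc n)
  let ?b = "ennreal (1 - measure M (to_bot c))"
  have "emeasure M (Cyl (Suc n) B - to_bot y) =
      (\<integral>\<^sup>+f. emeasure M {\<omega> \<in> \<Omega>. f ## \<omega> \<in> Cyl (Suc n) B - to_bot y} \<partial>measure_pmf \<mu>)"
    using Cyl_subset_streams by (intro emeasure_first_step) auto
  also have "\<dots> = (\<integral>\<^sup>+f. emeasure M (Cyl n {l. f # l \<in> B} - to_bot (f y)) \<partial>measure_pmf \<mu>)"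
    by (intro nn_integral_cong_AE AE_pmfI) (simp only: Stream_in_Cyl_diff_to_bot)
  also have "\<dots> \<le> (\<integral>\<^sup>+f. ?b * emeasure M (Cyl n {l. f # l \<in> B}) \<partial>measure_pmf \<mu>)"
    using Suc(2) by (intro nn_integral_mono Suc(1)) auto
  also have "\<dots> = ?b * (\<integral>\<^sup>+f. emeasure M (Cyl n {l. f # l \<in> B}) \<partial>measure_pmf \<mu>)"
    by (rule nn_integral_cmult) simp
  also have "(\<integral>\<^sup>+f. emeasure M (Cyl n {l. f # l \<in> B}) \<partial>measure_pmf \<mu>) = emeasure M (Cyl (Suc n) B)"
    using Cyl_subset_streams
    by (subst (2) emeasure_first_step)
       (auto simp: Stream_in_Cyl_Suc intro!: nn_integral_cong_AE AE_pmfI)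
  finally show ?case .
qed

text \<open>Decompose according to the first time \<open>m + n\<close> at which the orbit is below \<open>c\<close>, and apply
  the Markov property at that time.\<close>
lemma emeasure_returns_below_Int_Cyl_le:
  "emeasure M (returns_below c y \<inter> Cyl m B) \<le>
    ennreal (1 - measure M (to_bot c)) * emeasure M (Cyl m B)"
proof -
  define first_below where "first_below n = Cyl (m + n)
    {l. take m l \<in> B \<and> walk_list l y \<le> c \<and> (\<forall>k. m \<le> k \<and> k < m + n \<longrightarrow> c < walk_list (take k l) y)}"
    for n
  have cover: "returns_below c y \<inter> Cyl m B \<subseteq> (\<Union>n. first_below n - to_bot y)"
  proof
    fix \<omega> assume \<omega>: "\<omega> \<in> returns_below c y \<inter> Cyl m B"
    then have "\<exists>k. m \<le> k \<and> walk \<omega> k y \<le> c"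
      by (auto simp: returns_below_def INFM_nat_le)
    define k where "k = (LEAST k. m \<le> k \<and> walk \<omega> k y \<le> c)"
    have k: "m \<le> k \<and> walk \<omega> k y \<le> c"
      unfolding k_def by (rule LeastI_ex) fact
    have "c < walk \<omega> j y" if "m \<le> j" "j < k" for j
      using not_less_Least[of j "\<lambda>k. m \<le> k \<and> walk \<omega> k y \<le> c"] that by (auto simp: k_def)
    with \<omega> k have "\<omega> \<in> first_below (k - m)"
      by (auto simp: first_below_def returns_below_def Cyl_def take_stake min_def walk_eq_walk_list_stake)
    with \<omega> show "\<omega> \<in> (\<Union>n. first_below n - to_bot y)"
      by (auto simp: returns_below_def)
  qed
  have "first_below i \<inter> first_below j = {}" if "i < j" for i j
    using that by (auto simp: first_below_def Cyl_def take_stake min_def dest!: spec[of _ "m + i"])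
  then have disj: "disjoint_family first_below"
    unfolding disjoint_family_on_def by (metis inf_commute linorder_neqE_nat)
  have "emeasure M (returns_below c y \<inter> Cyl m B) \<le> (\<Sum>n. emeasure M (first_below n - to_bot y))"
    using cover
    by (intro order_trans[OF emeasure_mono emeasure_subadditive_countably])
       (auto simp: first_below_def)
  also have "\<dots> \<le> (\<Sum>n. ennreal (1 - measure M (to_bot c)) * emeasure M (first_below n))"
    unfolding first_below_def
    by (intro suminf_le summableI emeasure_Cyl_diff_to_bot_le) auto
  also have "\<dots> = ennreal (1 - measure M (to_bot c)) * emeasure M (\<Union>n. first_below n)"
    using suminf_emeasure[of first_below M] disj
    by (simp add: first_below_def image_subset_iff)
  also have "\<dots> \<le> ennreal (1 - measure M (to_bot c)) * emeasure M (Cyl m B)"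
    by (intro mult_left_mono emeasure_mono sets_Cyl)
       (auto simp: first_below_def Cyl_def take_stake min_def)
  finally show ?thesis .
qed

definition approx_by_Cyl :: "(real \<Rightarrow> real) stream set \<Rightarrow> bool" where
  "approx_by_Cyl E \<longleftrightarrow> (\<forall>e>0. \<exists>n B. measure M (sym_diff E (Cyl n B)) < e)"

lemma approx_by_Cyl_Cyl: "approx_by_Cyl (Cyl n B)"
  by (auto simp: approx_by_Cyl_def intro!: exI[of _ n] exI[of _ B])

lemma approx_by_Cyl_empty: "approx_by_Cyl {}"
  using approx_by_Cyl_Cyl[of 0 "{}"] by (simp add: Cyl_def)

lemma approx_by_Cyl_Diff:
  assumes "A \<subseteq> \<Omega>" and "approx_by_Cyl A"
  shows "approx_by_Cyl (\<Omega> - A)"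
proof -
  have "sym_diff (\<Omega> - A) (Cyl n (- B)) = sym_diff A (Cyl n B)" for n B
    using assms(1) Cyl_subset_streams[of n B] by (auto simp: Cyl_compl)
  with assms(2) show ?thesis
    unfolding approx_by_Cyl_def by metis
qed

lemma approx_by_Cyl_UN:
  fixes A :: "nat \<Rightarrow> (real \<Rightarrow> real) stream set"
  assumes sets: "\<And>i. A i \<in> sets M" and approx: "\<And>i. approx_by_Cyl (A i)"
  shows "approx_by_Cyl (\<Union>i. A i)"
  unfolding approx_by_Cyl_def
proof (intro allI impI)
  fix e :: real assume "e > 0"
  then obtain N where N: "measure M ((\<Union>i. A i) - (\<Union>i<N. A i)) < e / 2"
    using P.measure_UN_diff_UN_lessThan_less[of A "e / 2"] sets by auto
  define e' where "e' = e / (2 * (real N + 1))"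
  have "e' > 0"
    using \<open>e > 0\<close> by (simp add: e'_def)
  then have "\<forall>i. \<exists>n C. measure M (sym_diff (A i) (Cyl n C)) < e'"
    using approx by (auto simp: approx_by_Cyl_def)
  then obtain m :: "nat \<Rightarrow> nat" and B where mB: "\<And>i. measure M (sym_diff (A i) (Cyl (m i) (B i))) < e'"
    by metis
  obtain K C where KC: "Cyl K C = (\<Union>i<N. Cyl (m i) (B i))"
    using Cyl_Union_finite by blast
  have sets_diff: "sym_diff (A i) (Cyl (m i) (B i)) \<in> sets M" for i
    using sets by auto
  have "sym_diff (\<Union>i. A i) (Cyl K C) \<subseteq>
      ((\<Union>i. A i) - (\<Union>i<N. A i)) \<union> (\<Union>i<N. sym_diff (A i) (Cyl (m i) (B i)))"
    unfolding KC by auto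
  then have "measure M (sym_diff (\<Union>i. A i) (Cyl K C)) \<le>
      measure M ((\<Union>i. A i) - (\<Union>i<N. A i)) + measure M (\<Union>i<N. sym_diff (A i) (Cyl (m i) (B i)))"
    using sets sets_diff by (intro order_trans[OF P.finite_measure_mono measure_Un_le]) auto
  also have "measure M (\<Union>i<N. sym_diff (A i) (Cyl (m i) (B i))) \<le>
      (\<Sum>i<N. measure M (sym_diff (A i) (Cyl (m i) (B i))))"
    using sets_diff by (intro P.finite_measure_subadditive_finite) auto
  also have "\<dots> \<le> (\<Sum>i<N. e')"
    using mB by (intro sum_mono less_imp_le)
  also have "\<dots> \<le> e / 2"
    using \<open>e > 0\<close> by (simp add: e'_def field_simps)
  finally show "\<exists>n B. measure M (sym_diff (\<Union>i. A i) (Cyl n B)) < e"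
    using N by (intro exI[of _ K] exI[of _ C]) linarith
qed

lemma approx_by_Cyl_sets:
  assumes "E \<in> sets M" and "E \<subseteq> \<Omega>"
  shows "approx_by_Cyl E"
proof -
  let ?G = "sstart (set_pmf \<mu>) ` lists (set_pmf \<mu>) \<union> {{}}"
  have G: "?G \<subseteq> Pow \<Omega>"
    using sstart_in_streams[of _ "set_pmf \<mu>"] by blast
  have restrict: "sets (restrict_space M \<Omega>) = sigma_sets \<Omega> ?G"
    using G by (subst sets_restrict_space_cong[OF sets_M])
      (simp add: sets_restrict_stream_space restrict_count_space sets_stream_space_sstart)
  have "E \<in> sigma_sets \<Omega> ?G"
    using assms restrict sets_restrict_space_iff[of \<Omega> M E] by auto
  from Int_stable_sstart G this show ?thesis
  proof (induction rule: sigma_sets_induct_disjoint)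
    case (basic A)
    then show ?case
      by (auto simp: sstart_eq_Cyl approx_by_Cyl_Cyl approx_by_Cyl_empty)
  next
    case empty
    show ?case
      by (rule approx_by_Cyl_empty)
  next
    case (compl A)
    then show ?case
      using sigma_sets_into_sp[OF G] by (intro approx_by_Cyl_Diff) auto
  next
    case (union A)
    then show ?case
      using restrict sets_restrict_space_iff[of \<Omega> M] by (intro approx_by_Cyl_UN) auto
  qed
qed

lemma measure_returns_below_eq_0:
  assumes "measure M (to_bot c) > 0"
  shows "measure M (returns_below c y) = 0"
proof (rule ccontr)
  define x where "x = measure M (returns_below c y)"
  define \<delta> where "\<delta> = measure M (to_bot c)"
  assume "measure M (returns_below c y) \<noteq> 0"
  then have "x > 0"
    using measure_nonneg[of M "returns_below c y"] unfolding x_def by linarith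
  have "\<delta> \<le> 1" "\<delta> > 0"
    using assms by (simp_all add: \<delta>_def)
  define e where "e = \<delta> * x / 4"
  have "e > 0"
    using \<open>x > 0\<close> \<open>\<delta> > 0\<close> by (simp add: e_def)
  moreover have "approx_by_Cyl (returns_below c y)"
    by (rule approx_by_Cyl_sets[OF sets_returns_below]) (auto simp: returns_below_def)
  ultimately obtain m B where mB: "measure M (sym_diff (returns_below c y) (Cyl m B)) < e"
    by (auto simp: approx_by_Cyl_def)
  let ?C = "Cyl m B"
  have "measure M (returns_below c y \<inter> ?C) \<le> (1 - \<delta>) * measure M ?C"
    using emeasure_returns_below_Int_Cyl_le[of c y m B] \<open>\<delta> \<le> 1\<close>
    by (simp add: P.emeasure_eq_measure ennreal_mult''[symmetric] \<delta>_def)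
  moreover have "x \<le> measure M (returns_below c y \<inter> ?C) + measure M (sym_diff (returns_below c y) ?C)"
    unfolding x_def by (intro order_trans[OF P.finite_measure_mono measure_Un_le]) auto
  ultimately have "x \<le> (1 - \<delta>) * measure M ?C + e"
    using mB by linarith
  also have "measure M ?C \<le> x + measure M (sym_diff (returns_below c y) ?C)"
    unfolding x_def by (intro order_trans[OF P.finite_measure_mono measure_Un_le]) auto
  then have "(1 - \<delta>) * measure M ?C \<le> (1 - \<delta>) * (x + e)"
    using mB \<open>\<delta> \<le> 1\<close> by (intro mult_left_mono) auto
  finally have "x \<le> (1 - \<delta>) * (x + e) + e"
    by simp
  then have "\<delta> * x \<le> (2 - \<delta>) * e"
    by (simp add: algebra_simps)
  also have "\<dots> < 4 * e"
    using \<open>\<delta> > 0\<close> \<open>e > 0\<close> by simp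
  finally show False
    by (simp add: e_def)
qed

lemma to_top_Int_to_bot: "to_top z \<inter> to_bot z = {}"
  using filterlim_at_top_at_bot[where F = sequentially] by (auto simp: to_top_def to_bot_def)

lemma streams_diff_subset_returns_below:
  "\<Omega> - (to_top z \<union> to_bot z) \<subseteq> (\<Union>k::nat. returns_below (real k) z)"
proof
  fix \<omega> assume \<omega>: "\<omega> \<in> \<Omega> - (to_top z \<union> to_bot z)"
  then obtain k :: nat where "\<not> eventually (\<lambda>n. real k \<le> walk \<omega> n z) sequentially"
    by (auto simp: to_top_def filterlim_at_top_iff_of_nat)
  then have "\<exists>\<^sub>\<infinity>n. walk \<omega> n z \<le> real k"
    by (auto simp: INFM_nat_le eventually_sequentially not_le) (meson less_imp_le)
  with \<omega> show "\<omega> \<in> (\<Union>k::nat. returns_below (real k) z)"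
    by (auto simp: returns_below_def)
qed

lemma measure_to_top_add_to_bot:
  assumes "\<And>c. measure M (to_bot c) > 0"
  shows "measure M (to_top z) + measure M (to_bot z) = 1"
proof -
  have "(\<Union>k::nat. returns_below (real k) z) \<in> null_sets M"
    using measure_returns_below_eq_0[OF assms]
    by (intro null_sets_UN) (simp add: null_sets_def P.emeasure_eq_measure)
  then have "\<Omega> - (to_top z \<union> to_bot z) \<in> null_sets M"
    by (rule null_sets_subset[OF _ _ streams_diff_subset_returns_below]) auto
  then have "measure M (\<Omega> - (to_top z \<union> to_bot z)) = 0"
    by (rule measure_eq_0_null_sets)
  moreover have "measure M (\<Omega> - (to_top z \<union> to_bot z)) = 1 - measure M (to_top z \<union> to_bot z)"
    using to_top_subset_streams to_bot_subset_streams
    by (subst P.finite_measure_Diff) (auto simp: measure_streams)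
  moreover have "measure M (to_top z \<union> to_bot z) = measure M (to_top z) + measure M (to_bot z)"
    using to_top_Int_to_bot by (intro P.finite_measure_Union) auto
  ultimately show ?thesis
    by simp
qed

end

theorem proposition2:
  fixes \<mu> :: "(real \<Rightarrow> real) pmf"
  assumes "\<forall>f \<in> set_pmf \<mu>. homeo_plus f"
    and "shiftable \<mu>"
    and "\<exists>x y. phi_plus \<mu> x > 0 \<and> phi_minus \<mu> y > 0"
  shows "\<forall>z. phi_plus \<mu> z + phi_minus \<mu> z = 1"
proof -
  interpret homeo_walk \<mu>
    using assms(1) by unfold_locales
  from assms(3) obtain y where "measure M (to_bot y) > 0"
    by (auto simp: phi_minus_eq)
  then have "measure M (to_bot c) > 0" for c
    using measure_to_bot_pos[OF assms(2)] by blast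
  then show ?thesis
    using measure_to_top_add_to_bot by (simp add: phi_plus_eq phi_minus_eq)
qed

end
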